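(* Let $h$ be an admissible perturbation. There exist constants $\overline C_e<C_e$, $e\in\mathcal E$, depending only on $h$ and the network (not on $\eta$), such that for every $\eta>0$ there is $t_0\ge0$ with the following property: for every admissible initial condition, the solution of the dynamics with rate $\eta$ satisfies $f^\pi_e(t)=(A\pi(t))_e\le\overline C_e$ for all $t\ge t_0$ and all $e\in\mathcal E$.
   Context: Network: $\mathcal G=(\mathcal V,\mathcal E)$ is a finite directed graph with $\mathcal V=\{0,1,\dots,n\}$, containing no directed cycle, in which node $0$ is the unique node with no incoming link, node $n$ is the unique node with no outgoing link, there is a directed path from every node to $n$, and every link $(u,v)\in\mathcal E$ satisfies $u<v$. For $v\in\mathcal V$, $\mathcal E_v^-$ and $\mathcal E_v^+$ are the sets of links entering and leaving $v$. Each link $e$ has a flow-density function $\mu_e:[0,\infty)\to[0,\infty)$ that is continuously differentiable, strictly increasing, strictly concave, with $\mu_e(0)=0$ and $\mu_e'(0)<\infty$; its capacity is $C_e:=\lim_{\rho\to\infty}\mu_e(\rho)\in(0,+\infty]$. Put $\mathcal F_v:=\prod_{e\in\mathcal E_v^+}[0,C_e)$, $\mathcal F:=\prod_{e\in\mathcal E}[0,C_e)$, and $\mu(\rho):=(\mu_e(\rho_e))_{e\in\mathcal E}$. The delay is $T_e(f_e)=\mu_e^{-1}(f_e)/f_e$ for $0<f_e<C_e$, $T_e(0)=1/\mu_e'(0)$, $T_e(f_e)=+\infty$ for $f_e\ge C_e$; $T(f):=(T_e(f_e))_e$. $\mathcal P$ is the set of directed paths from $0$ to $n$, $A\in\{0,1\}^{\mathcal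 E\times\mathcal P}$ the link-path incidence matrix ($A_{ep}=1$ iff $e\in p$), $\mathcal S(\mathcal P)=\{\pi\in\mathbb R_+^{\mathcal P}:\sum_p\pi_p=1\}$, $\Pi:=\{\pi\in\mathcal S(\mathcal P):(A\pi)_e<C_e\ \forall e\}$, and $f^\pi:=A\pi$. The min-cut capacity $C^*:=\min\{\sum_{(u,v)\in\mathcal E:u\in\mathcal U,v\notin\mathcal U}C_{(u,v)}:\mathcal U\subseteq\mathcal V,0\in\mathcal U,n\notin\mathcal U\}$ is assumed to satisfy $C^*>1$. Perturbation: $\Phi:=I-|\mathcal P|^{-1}\mathbf 1\mathbf 1'$; interiors $\mathrm{int}$ and boundaries $\partial$ of subsets of $\mathcal S(\mathcal P)$ are relative to the hyperplane $\{x:\mathbf 1'x=1\}$. An admissible perturbation is a function $h:\Pi_h\to\mathbb R$, where $\Pi_h\subseteq\Pi$ is closed in $\mathbb R^{\mathcal P}$, convex, with nonempty interior, $h$ is strictly convex, twice differentiable on $\mathrm{int}(\Pi_h)$, and $\|\tilde\nabla h(\pi)\|\to+\infty$ as $\pi\to\partial\Pi_h$, where $\tilde\nabla h:=\Phi\nabla h$. Its perturbed best response is $F^h(f):=\arg\min_{\omega\in\Pi_h}\{\omega'A'T(f)+h(\omega)\}$ for $f\in\mathcal F$. Local decisions: for each $v\in\{0,\dots,n-1\}$ a continuously differentiable $G^v:\mathcal F_v\times\Pi\to\mathcal S(\mathcal E_v^+)$ is given such that (consistency) $(\sum_{j\in\mathcal E_v^+}f^\pi_j)\,G^v_e(f^\pi_{\mathcal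 E_v^+},\pi)=f^\pi_e$ for all $\pi\in\Pi$, $e\in\mathcal E_v^+$; and (cooperativity) $\partial G^v_j(f_{\mathcal E_v^+},\pi)/\partial f_e\ge0$ for all $\pi\in\Pi$, $f_{\mathcal E_v^+}\in\mathcal F_v$, $j\neq e\in\mathcal E_v^+$. For $f\in\mathcal F$, $\pi\in\Pi$, $e\in\mathcal E_v^+$: $H_e(f,\pi):=G^v_e(f_{\mathcal E_v^+},\pi)-f_e$ if $v=0$, and $H_e(f,\pi):=(\sum_{j\in\mathcal E_v^-}f_j)G^v_e(f_{\mathcal E_v^+},\pi)-f_e$ if $1\le v<n$. Dynamics: for $\eta>0$, $\dot\pi=\eta(F^h(f)-\pi)$, $\dot\rho=H(f,\pi)$, $f=\mu(\rho)$. An admissible initial condition is $\pi(0)\in\Pi$ with all entries positive and $\rho(0)\in(0,\infty)^{\mathcal E}$; $(\pi(t),\rho(t))_{t\ge0}$ denotes the (unique, global) solution, $f(t):=\mu(\rho(t))$, $f^\pi(t):=A\pi(t)$. *)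

theory Defs
  imports "HOL-Analysis.Analysis" "HOL-Library.Extended_Real"
begin

text \<open>Nodes are 0..n (naturals); links are elements of a finite type 'e,
  the link e goes from node src e to node dst e.  Paths from 0 to n are elements of a
  finite type 'p, enumerated by the bijection pth onto the set of directed paths
  (as lists of links).\<close>

definition is_path :: "('e \<Rightarrow> nat) \<Rightarrow> ('e \<Rightarrow> nat) \<Rightarrow> nat \<Rightarrow> 'e list \<Rightarrow> bool" where
  "is_path src dst n es \<longleftrightarrow> es \<noteq> [] \<and> src (es ! 0) = 0 \<and> dst (last es) = n \<and>
     (\<forall>i. Suc i < length es \<longrightarrow> dst (es ! i) = src (es ! Suc i))"

definition reach :: "('e \<Rightarrow> nat) \<Rightarrow> ('e \<Rightarrow> nat) \<Rightarrow> nat \<Rightarrow> nat \<Rightarrow> bool" where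
  "reach src dst u w \<longleftrightarrow> (\<exists>es. es \<noteq> [] \<and> src (es ! 0) = u \<and> dst (last es) = w \<and>
     (\<forall>i. Suc i < length es \<longrightarrow> dst (es ! i) = src (es ! Suc i)))"

definition network :: "nat \<Rightarrow> ('e::finite \<Rightarrow> nat) \<Rightarrow> ('e \<Rightarrow> nat) \<Rightarrow> ('p::finite \<Rightarrow> 'e list) \<Rightarrow> bool" where
  "network n src dst pth \<longleftrightarrow>
     1 \<le> n \<and>
     inj (\<lambda>e. (src e, dst e)) \<and>
     (\<forall>e. src e < dst e \<and> dst e \<le> n) \<and>
     (\<forall>v. 1 \<le> v \<and> v \<le> n \<longrightarrow> (\<exists>e. dst e = v)) \<and>
     (\<forall>v. v < n \<longrightarrow> (\<exists>e. src e = v)) \<and>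
     (\<forall>v. v < n \<longrightarrow> reach src dst v n) \<and>
     bij_betw pth UNIV {es. is_path src dst n es}"

definition strict_concave_on :: "real set \<Rightarrow> (real \<Rightarrow> real) \<Rightarrow> bool" where
  "strict_concave_on S g \<longleftrightarrow> (\<forall>x\<in>S. \<forall>y\<in>S. x \<noteq> y \<longrightarrow> (\<forall>t. 0 < t \<and> t < 1 \<longrightarrow>
      g ((1 - t) * x + t * y) > (1 - t) * g x + t * g y))"

definition flow_density :: "('e \<Rightarrow> real \<Rightarrow> real) \<Rightarrow> bool" where
  "flow_density mu \<longleftrightarrow> (\<forall>e.
     (\<exists>d. (\<forall>x\<ge>0. (mu e has_real_derivative d x) (at x within {0..})) \<and> continuous_on {0..} d) \<and>
     strict_mono_on {0..} (mu e) \<and>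
     strict_concave_on {0..} (mu e) \<and>
     mu e 0 = 0)"

text \<open>Capacity: limit at infinity of the increasing function mu e (= its supremum).\<close>
definition cap :: "('e \<Rightarrow> real \<Rightarrow> real) \<Rightarrow> 'e \<Rightarrow> ereal" where
  "cap mu e = (SUP r\<in>{0::real..}. ereal (mu e r))"

definition deriv0 :: "('e \<Rightarrow> real \<Rightarrow> real) \<Rightarrow> 'e \<Rightarrow> real" where
  "deriv0 mu e = (THE d. (mu e has_real_derivative d) (at 0 within {0..}))"

definition mu_inv :: "('e \<Rightarrow> real \<Rightarrow> real) \<Rightarrow> 'e \<Rightarrow> real \<Rightarrow> real" where
  "mu_inv mu e y = (THE r. 0 \<le> r \<and> mu e r = y)"

text \<open>Delay; only used for 0 <= f < C_e, where it is finite.\<close>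
definition delay :: "('e \<Rightarrow> real \<Rightarrow> real) \<Rightarrow> 'e \<Rightarrow> real \<Rightarrow> real" where
  "delay mu e y = (if y = 0 then 1 / deriv0 mu e else mu_inv mu e y / y)"

definition Fset :: "('e::finite \<Rightarrow> real \<Rightarrow> real) \<Rightarrow> (real^'e) set" where
  "Fset mu = {f. \<forall>e. 0 \<le> f $ e \<and> ereal (f $ e) < cap mu e}"

definition fpi :: "('p::finite \<Rightarrow> 'e list) \<Rightarrow> real^'p \<Rightarrow> real^'e::finite" where
  "fpi pth \<pi> = (\<chi> e. \<Sum>p\<in>{p. e \<in> set (pth p)}. \<pi> $ p)"

definition psimplex :: "(real^'p::finite) set" where
  "psimplex = {\<pi>. (\<forall>p. 0 \<le> \<pi> $ p) \<and> (\<Sum>p\<in>UNIV. \<pi> $ p) = 1}"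

definition Pi_set :: "('p::finite \<Rightarrow> 'e list) \<Rightarrow> ('e::finite \<Rightarrow> real \<Rightarrow> real) \<Rightarrow> (real^'p) set" where
  "Pi_set pth mu = {\<pi>\<in>psimplex. \<forall>e. ereal (fpi pth \<pi> $ e) < cap mu e}"

definition mincut :: "nat \<Rightarrow> ('e::finite \<Rightarrow> nat) \<Rightarrow> ('e \<Rightarrow> nat) \<Rightarrow> ('e \<Rightarrow> real \<Rightarrow> real) \<Rightarrow> ereal" where
  "mincut n src dst mu = Min ((\<lambda>U. \<Sum>e\<in>{e. src e \<in> U \<and> dst e \<notin> U}. cap mu e) `
      {U. U \<subseteq> {0..n} \<and> 0 \<in> U \<and> n \<notin> U})"

definition hyp :: "(real^'p::finite) set" where
  "hyp = {x. (\<Sum>p\<in>UNIV. x $ p) = 1}"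

definition rint :: "(real^'p::finite) set \<Rightarrow> (real^'p) set" where
  "rint S = {x\<in>S. \<exists>\<epsilon>>0. ball x \<epsilon> \<inter> hyp \<subseteq> S}"

definition rbd :: "(real^'p::finite) set \<Rightarrow> (real^'p) set" where
  "rbd S = closure S - rint S"

definition strict_convex_on :: "(real^'p::finite) set \<Rightarrow> (real^'p \<Rightarrow> real) \<Rightarrow> bool" where
  "strict_convex_on S g \<longleftrightarrow> (\<forall>x\<in>S. \<forall>y\<in>S. x \<noteq> y \<longrightarrow> (\<forall>t. 0 < t \<and> t < 1 \<longrightarrow>
      g ((1 - t) *\<^sub>R x + t *\<^sub>R y) < (1 - t) * g x + t * g y))"

text \<open>Admissible perturbation.  gh x is the projected gradient Phi (grad h)(x), i.e.
  the gradient of h along the hyperplane (a vector with zero coordinate sum).\<close>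
definition admissible_pert ::
  "('p::finite \<Rightarrow> 'e list) \<Rightarrow> ('e::finite \<Rightarrow> real \<Rightarrow> real) \<Rightarrow> (real^'p) set \<Rightarrow> (real^'p \<Rightarrow> real) \<Rightarrow> bool" where
  "admissible_pert pth mu Ph h \<longleftrightarrow>
     Ph \<subseteq> Pi_set pth mu \<and> closed Ph \<and> convex Ph \<and> rint Ph \<noteq> {} \<and>
     strict_convex_on Ph h \<and>
     (\<exists>gh :: real^'p \<Rightarrow> real^'p.
        (\<forall>x\<in>rint Ph. (\<Sum>p\<in>UNIV. gh x $ p) = 0 \<and>
            (h has_derivative (\<lambda>v. gh x \<bullet> v)) (at x within Ph) \<and>
            gh differentiable (at x within Ph)) \<and>
        (\<forall>b\<in>rbd Ph. filterlim (\<lambda>x. norm (gh x)) at_top (at b within rint Ph)))"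

definition Fh ::
  "('p::finite \<Rightarrow> 'e list) \<Rightarrow> ('e::finite \<Rightarrow> real \<Rightarrow> real) \<Rightarrow> (real^'p) set \<Rightarrow> (real^'p \<Rightarrow> real)
     \<Rightarrow> real^'e \<Rightarrow> real^'p" where
  "Fh pth mu Ph h f = (THE \<omega>. \<omega> \<in> Ph \<and> (\<forall>\<omega>'\<in>Ph.
      (\<Sum>p\<in>UNIV. \<omega> $ p * (\<Sum>e\<in>set (pth p). delay mu e (f $ e))) + h \<omega>
    \<le> (\<Sum>p\<in>UNIV. \<omega>' $ p * (\<Sum>e\<in>set (pth p). delay mu e (f $ e))) + h \<omega>'))"

text \<open>G v takes the full flow vector, but is only ever applied to
  the restriction of f to the links leaving v (other coordinates set to 0);
  only its coordinates on links leaving v are meaningful.\<close>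

definition restr :: "('e::finite \<Rightarrow> nat) \<Rightarrow> nat \<Rightarrow> real^'e \<Rightarrow> real^'e" where
  "restr src v f = (\<chi> e. if src e = v then f $ e else 0)"

definition Fv :: "('e::finite \<Rightarrow> nat) \<Rightarrow> ('e \<Rightarrow> real \<Rightarrow> real) \<Rightarrow> nat \<Rightarrow> (real^'e) set" where
  "Fv src mu v = {x. \<forall>e. if src e = v then 0 \<le> x $ e \<and> ereal (x $ e) < cap mu e else x $ e = 0}"

definition local_decisions ::
  "nat \<Rightarrow> ('e::finite \<Rightarrow> nat) \<Rightarrow> ('p::finite \<Rightarrow> 'e list) \<Rightarrow> ('e \<Rightarrow> real \<Rightarrow> real)
     \<Rightarrow> (nat \<Rightarrow> real^'e \<Rightarrow> real^'p \<Rightarrow> real^'e) \<Rightarrow> bool" where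
  "local_decisions n src pth mu G \<longleftrightarrow> (\<forall>v<n.
     \<comment> \<open>values in the psimplex over the outgoing links\<close>
     (\<forall>x\<in>Fv src mu v. \<forall>\<pi>\<in>Pi_set pth mu.
        (\<forall>e. src e = v \<longrightarrow> 0 \<le> G v x \<pi> $ e) \<and> (\<Sum>e\<in>{e. src e = v}. G v x \<pi> $ e) = 1) \<and>
     \<comment> \<open>continuously differentiable on F_v x Pi\<close>
     (\<exists>D. (\<forall>z\<in>Fv src mu v \<times> Pi_set pth mu.
            ((\<lambda>(x, \<pi>). G v x \<pi>) has_derivative blinfun_apply (D z)) (at z within Fv src mu v \<times> Pi_set pth mu))
          \<and> continuous_on (Fv src mu v \<times> Pi_set pth mu) D) \<and>
     \<comment> \<open>consistency\<close>
     (\<forall>\<pi>\<in>Pi_set pth mu. \<forall>e. src e = v \<longrightarrow>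
        (\<Sum>j\<in>{j. src j = v}. fpi pth \<pi> $ j) * G v (restr src v (fpi pth \<pi>)) \<pi> $ e = fpi pth \<pi> $ e) \<and>
     \<comment> \<open>cooperativity: partial derivative of G_j w.r.t. f_e is nonnegative, j ~= e\<close>
     (\<forall>x\<in>Fv src mu v. \<forall>\<pi>\<in>Pi_set pth mu. \<forall>j e d. src j = v \<longrightarrow> src e = v \<longrightarrow> j \<noteq> e \<longrightarrow>
        ((\<lambda>s. G v (x + s *\<^sub>R axis e 1) \<pi> $ j) has_real_derivative d)
           (at 0 within {s. x + s *\<^sub>R axis e 1 \<in> Fv src mu v}) \<longrightarrow> 0 \<le> d))"

definition Hfun ::
  "('e::finite \<Rightarrow> nat) \<Rightarrow> ('e \<Rightarrow> nat) \<Rightarrow> (nat \<Rightarrow> real^'e \<Rightarrow> real^'p \<Rightarrow> real^'e)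
     \<Rightarrow> real^'e \<Rightarrow> real^'p \<Rightarrow> real^'e" where
  "Hfun src dst G f \<pi> = (\<chi> e. let v = src e in
     (if v = 0 then G v (restr src v f) \<pi> $ e - f $ e
      else (\<Sum>j\<in>{j. dst j = v}. f $ j) * G v (restr src v f) \<pi> $ e - f $ e))"

definition muvec :: "('e::finite \<Rightarrow> real \<Rightarrow> real) \<Rightarrow> real^'e \<Rightarrow> real^'e" where
  "muvec mu \<rho> = (\<chi> e. mu e (\<rho> $ e))"

definition is_solution ::
  "('e::finite \<Rightarrow> nat) \<Rightarrow> ('e \<Rightarrow> nat) \<Rightarrow> ('p::finite \<Rightarrow> 'e list) \<Rightarrow> ('e \<Rightarrow> real \<Rightarrow> real)
    \<Rightarrow> (real^'p) set \<Rightarrow> (real^'p \<Rightarrow> real) \<Rightarrow> (nat \<Rightarrow> real^'e \<Rightarrow> real^'p \<Rightarrow> real^'e) \<Rightarrow> real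
    \<Rightarrow> (real \<Rightarrow> real^'p) \<Rightarrow> (real \<Rightarrow> real^'e) \<Rightarrow> bool" where
  "is_solution src dst pth mu Ph h G \<eta> \<pi> \<rho> \<longleftrightarrow> (\<forall>t\<ge>0.
     \<pi> t \<in> Pi_set pth mu \<and> (\<forall>e. 0 \<le> \<rho> t $ e) \<and>
     (\<pi> has_vector_derivative \<eta> *\<^sub>R (Fh pth mu Ph h (muvec mu (\<rho> t)) - \<pi> t)) (at t within {0..}) \<and>
     (\<rho> has_vector_derivative Hfun src dst G (muvec mu (\<rho> t)) (\<pi> t)) (at t within {0..}))"

definition admissible_init :: "('p::finite \<Rightarrow> 'e list) \<Rightarrow> ('e::finite \<Rightarrow> real \<Rightarrow> real) \<Rightarrow> real^'p \<Rightarrow> real^'e \<Rightarrow> bool" where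
  "admissible_init pth mu \<pi>0 \<rho>0 \<longleftrightarrow> \<pi>0 \<in> Pi_set pth mu \<and> (\<forall>p. 0 < \<pi>0 $ p) \<and> (\<forall>e. 0 < \<rho>0 $ e)"

end

theory Submission
  imports Defs
begin

text \<open>
  (1) The perturbed best response is well defined and takes values in \<open>Ph\<close>.  \<open>Ph\<close> is a
  compact convex subset of the simplex on which \<open>h\<close> is strictly convex and has steep
  gradient at the relative boundary (locale \<open>steep_convex\<close>).  For a cost vector \<open>c\<close> the
  perturbed cost \<open>c \<bullet> \<omega> + h \<omega>\<close> is bounded below by a tangent-plane estimate; a
  minimising sequence has a limit point \<open>b\<close> obeying a tangent inequality at every
  relatively interior point.  If \<open>b\<close> lay on the relative boundary, the tangent inequality
  at points of the segment from \<open>b\<close> to an interior point \<open>x0\<close> would force the gradient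
  there to stay bounded (a ball around \<open>x0\<close> limits how steep a supporting plane can be),
  contradicting steepness.  So \<open>b\<close> is a minimiser, unique by strict convexity.

  (2) Let \<open>M e\<close> be the maximal flow on link \<open>e\<close> over \<open>Ph\<close>; it is below the capacity.
  Since the best response lies in \<open>Ph\<close>, the link flow \<open>g\<close> of a solution obeys
  \<open>g' \<le> \<eta> (M e - g)\<close>, so by a Gronwall argument its excess over \<open>M e\<close> halves by time
  \<open>ln 2 / \<eta>\<close>.  As the initial flow is below \<open>min 1 (cap mu e)\<close>, the bound
  \<open>Cbar e = (M e + min 1 (cap mu e)) / 2\<close> holds from then on, uniformly in \<eta>.
\<close>

section \<open>Convex functions and tangent planes\<close>

lemma strict_convex_on_imp_convex_on:
  fixes h :: "real^'p::finite \<Rightarrow> real"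
  assumes "convex S" and "strict_convex_on S h"
  shows "convex_on S h"
proof (rule convex_onI)
  fix t :: real and x y assume t: "0 < t" "t < 1" and xy: "x \<in> S" "y \<in> S"
  show "h ((1 - t) *\<^sub>R x + t *\<^sub>R y) \<le> (1 - t) * h x + t * h y"
  proof (cases "x = y")
    case True then show ?thesis by (simp add: algebra_simps)
  next
    case False then show ?thesis
      using assms(2) t xy unfolding strict_convex_on_def by (blast intro: less_imp_le)
  qed
qed (rule assms(1))

lemma convex_on_above_tangent_plane:
  fixes h :: "'a::real_inner \<Rightarrow> real"
  assumes conv: "convex_on S h" and x: "x \<in> S" and y: "y \<in> S"
    and der: "(h has_derivative (\<lambda>v. g \<bullet> v)) (at x within S)"
  shows "h x + g \<bullet> (y - x) \<le> h y"
proof -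
  define l where "l = (\<lambda>t::real. x + t *\<^sub>R (y - x))"
  have l_comb: "l t = (1 - t) *\<^sub>R x + t *\<^sub>R y" for t by (simp add: l_def algebra_simps)
  have l_in: "l t \<in> S" if "t \<in> {0..1}" for t
    using convexD_alt[OF convex_on_imp_convex[OF conv] x y, of t] that by (simp add: l_comb)
  have l0: "l 0 = x" by (simp add: l_def)
  have dl: "(l has_derivative (\<lambda>t. t *\<^sub>R (y - x))) (at 0 within {0..1})"
    unfolding l_def by (auto intro!: derivative_eq_intros)
  have dh: "(h has_derivative (\<lambda>v. g \<bullet> v)) (at (l 0) within l ` {0..1})"
    using has_derivative_subset[OF der, of "l ` {0..1}"] l0 l_in by (auto simp: image_subset_iff)
  from has_derivative_in_compose[OF dl dh]
  have "((h \<circ> l) has_derivative (\<lambda>t. g \<bullet> (t *\<^sub>R (y - x)))) (at 0 within {0..1})"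
    by (simp add: o_def)
  then have "((h \<circ> l) has_real_derivative g \<bullet> (y - x)) (at 0 within {0..1})"
    unfolding has_field_derivative_def by (rule has_derivative_eq_rhs) (auto simp: fun_eq_iff)
  then have lim: "((\<lambda>t. ((h \<circ> l) t - (h \<circ> l) 0) / (t - 0)) \<longlongrightarrow> g \<bullet> (y - x)) (at 0 within {0..1})"
    using has_field_derivative_iff by blast
  have "eventually (\<lambda>t. ((h \<circ> l) t - (h \<circ> l) 0) / (t - 0) \<le> h y - h x) (at 0 within {0..1})"
    unfolding eventually_at_filter
  proof (intro always_eventually allI impI)
    fix t :: real assume t: "t \<noteq> 0" "t \<in> {0..1}"
    then have "h (l t) \<le> (1 - t) * h x + t * h y"
      using convex_onD[OF conv, of t x y] x y by (simp add: l_comb)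
    then show "((h \<circ> l) t - (h \<circ> l) 0) / (t - 0) \<le> h y - h x"
      using t by (simp add: l0 divide_simps algebra_simps)
  qed
  then have "g \<bullet> (y - x) \<le> h y - h x"
    by (rule tendsto_upperbound[OF lim]) (simp add: at_within_Icc_at_right)
  then show ?thesis by simp
qed

text \<open>This is how
  a minimiser is found without knowing that \<open>\<phi>\<close> is lower semicontinuous.\<close>
lemma minimising_sequence_limit:
  fixes \<phi> :: "'a::real_inner \<Rightarrow> real" and v :: "'a \<Rightarrow> 'a"
  assumes "compact S" and "S \<noteq> {}" and "bdd_below (\<phi> ` S)"
    and tangent: "\<And>x y. x \<in> T \<Longrightarrow> y \<in> S \<Longrightarrow> \<phi> x + v x \<bullet> (y - x) \<le> \<phi> y"
  shows "\<exists>b\<in>S. \<forall>x\<in>T. \<phi> x + v x \<bullet> (b - x) \<le> Inf (\<phi> ` S)"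
proof -
  define m where "m = Inf (\<phi> ` S)"
  have "\<exists>w\<in>S. \<phi> w < m + 1 / (real k + 1)" for k :: nat
    using cInf_lessD[of "\<phi> ` S" "m + 1 / (real k + 1)"] \<open>S \<noteq> {}\<close> by (auto simp: m_def)
  then obtain w where w: "\<And>k. w k \<in> S" "\<And>k. \<phi> (w k) < m + 1 / (real k + 1)" by metis
  obtain b r where b: "b \<in> S" and r: "strict_mono r" and lim: "(w \<circ> r) \<longlonglongrightarrow> b"
    using compact_imp_seq_compact[OF \<open>compact S\<close>] w(1) by (metis seq_compactE)
  have "\<phi> x + v x \<bullet> (b - x) \<le> m" if x: "x \<in> T" for x
  proof (rule LIMSEQ_le)
    show "(\<lambda>k. \<phi> x + v x \<bullet> (w (r k) - x)) \<longlonglongrightarrow> \<phi> x + v x \<bullet> (b - x)"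
      using lim by (auto intro!: tendsto_intros simp: o_def)
    show "(\<lambda>k. m + 1 / (real k + 1)) \<longlonglongrightarrow> m"
      using tendsto_add[OF tendsto_const LIMSEQ_inverse_real_of_nat, of m]
      by (simp add: inverse_eq_divide add.commute)
    show "\<exists>N. \<forall>k\<ge>N. \<phi> x + v x \<bullet> (w (r k) - x) \<le> m + 1 / (real k + 1)"
    proof (intro exI allI impI)
      fix k :: nat
      have "\<phi> x + v x \<bullet> (w (r k) - x) \<le> \<phi> (w (r k))" using tangent[OF x w(1)] .
      also have "\<dots> < m + 1 / (real (r k) + 1)" by (rule w(2))
      also have "\<dots> \<le> m + 1 / (real k + 1)" using seq_suble[OF r, of k] by (simp add: frac_le)
      finally show "\<phi> x + v x \<bullet> (w (r k) - x) \<le> m + 1 / (real k + 1)" by simp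
    qed
  qed
  then show ?thesis using b by (auto simp: m_def)
qed

lemma psimplex_hyp: "psimplex \<subseteq> (hyp :: (real^'p::finite) set)"
  by (auto simp: psimplex_def hyp_def)

lemma psimplex_bounded: "bounded (psimplex :: (real^'p::finite) set)"
proof -
  have "norm x \<le> 1" if "x \<in> psimplex" for x :: "real^'p"
    using norm_le_l1_cart[of x] that by (simp add: psimplex_def)
  then show ?thesis unfolding bounded_iff by blast
qed

lemma rint_subset: "rint S \<subseteq> S"
  by (auto simp: rint_def)

lemma rint_segment:
  fixes S :: "(real^'p::finite) set"
  assumes conv: "convex S" and sub: "S \<subseteq> hyp" and b: "b \<in> S" and x0: "x0 \<in> rint S"
    and s: "0 < s" "s \<le> 1"
  shows "b + s *\<^sub>R (x0 - b) \<in> rint S"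
proof -
  obtain e where e: "e > 0" "ball x0 e \<inter> hyp \<subseteq> S" and x0S: "x0 \<in> S"
    using x0 by (auto simp: rint_def)
  let ?y = "b + s *\<^sub>R (x0 - b)"
  have y_comb: "?y = (1 - s) *\<^sub>R b + s *\<^sub>R x0" by (simp add: algebra_simps)
  have "ball ?y (s * e) \<inter> hyp \<subseteq> S"
  proof
    fix z assume z: "z \<in> ball ?y (s * e) \<inter> hyp"
    define w where "w = (1/s) *\<^sub>R (z - (1 - s) *\<^sub>R b)"
    have zw: "z = (1 - s) *\<^sub>R b + s *\<^sub>R w" using s by (simp add: w_def algebra_simps)
    have "w - x0 = (1/s) *\<^sub>R (z - ?y)" using s by (simp add: w_def algebra_simps)
    then have "norm (w - x0) = (1/s) * norm (z - ?y)" using s by simp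
    also have "\<dots> < e"
      using z s by (auto simp: dist_norm norm_minus_commute pos_divide_less_eq mult.commute)
    finally have "w \<in> ball x0 e" by (simp add: dist_norm norm_minus_commute)
    moreover have "w \<in> hyp"
    proof -
      have "(\<Sum>p\<in>UNIV. z $ p) = 1" "(\<Sum>p\<in>UNIV. b $ p) = 1" using z b sub by (auto simp: hyp_def)
      then have "(\<Sum>p\<in>UNIV. (z $ p - (1 - s) * b $ p) / s) = (1 - (1 - s) * 1) / s"
        by (simp add: sum_divide_distrib[symmetric] sum_subtractf sum_distrib_left[symmetric])
      then show ?thesis using s by (simp add: hyp_def w_def)
    qed
    ultimately have "w \<in> S" using e by auto
    then show "z \<in> S" using zw convexD_alt[OF conv b, of w s] s by auto
  qed
  moreover have "?y \<in> S" using convexD_alt[OF conv b x0S, of s] s y_comb by auto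
  ultimately show ?thesis using e s by (auto simp: rint_def intro!: exI[of _ "s * e"])
qed

lemma hyp_ball_step:
  assumes ball: "ball x0 e \<inter> hyp \<subseteq> S" and x0: "x0 \<in> hyp"
    and u: "(\<Sum>p\<in>UNIV. u $ p) = 0" "norm u = 1" and r: "0 \<le> r" "r < e"
  shows "x0 + r *\<^sub>R u \<in> S"
proof -
  have "x0 + r *\<^sub>R u \<in> ball x0 e" using u r by (simp add: dist_norm)
  moreover have "x0 + r *\<^sub>R u \<in> hyp"
    using x0 u by (simp add: hyp_def sum.distrib sum_distrib_left[symmetric])
  ultimately show ?thesis using ball by blast
qed

section \<open>Minimising a perturbed linear cost\<close>

locale steep_convex =
  fixes S :: "(real^'p::finite) set" and h :: "real^'p \<Rightarrow> real" and gh :: "real^'p \<Rightarrow> real^'p"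
  assumes S_compact: "compact S" and S_convex: "convex S" and S_hyp: "S \<subseteq> hyp"
    and rint_nonempty: "rint S \<noteq> {}"
    and h_strict_convex: "strict_convex_on S h"
    and gh_tangent: "\<And>x. x \<in> rint S \<Longrightarrow> (\<Sum>p\<in>UNIV. gh x $ p) = 0"
    and gh_deriv: "\<And>x. x \<in> rint S \<Longrightarrow> (h has_derivative (\<lambda>v. gh x \<bullet> v)) (at x within S)"
    and gh_steep: "\<And>b. b \<in> rbd S \<Longrightarrow> filterlim (\<lambda>x. norm (gh x)) at_top (at b within rint S)"
begin

definition cost :: "real^'p \<Rightarrow> real^'p \<Rightarrow> real" where
  "cost c \<omega> = c \<bullet> \<omega> + h \<omega>"

lemma cost_tangent:
  assumes "x \<in> rint S" and "y \<in> S"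
  shows "cost c x + (c + gh x) \<bullet> (y - x) \<le> cost c y"
proof -
  have "h x + gh x \<bullet> (y - x) \<le> h y"
    using convex_on_above_tangent_plane[OF strict_convex_on_imp_convex_on[OF S_convex h_strict_convex]
        _ assms(2) gh_deriv[OF assms(1)]] assms(1) rint_subset by blast
  then show ?thesis by (simp add: cost_def inner_add_left inner_diff_right)
qed

lemma S_nonempty: "S \<noteq> {}"
  using rint_nonempty rint_subset by blast

lemma S_bounded_norm: obtains B where "\<And>y. y \<in> S \<Longrightarrow> norm y \<le> B"
  using compact_imp_bounded[OF S_compact] unfolding bounded_iff by blast

text \<open>Bounded below: the tangent plane at an interior point minorises the cost on the bounded
  set \<open>S\<close>.\<close>
lemma cost_bounded_below: "bdd_below (cost c ` S)"
proof -
  obtain x0 where x0: "x0 \<in> rint S" using rint_nonempty by blast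
  then have x0S: "x0 \<in> S" using rint_subset by blast
  obtain B where B: "\<And>y. y \<in> S \<Longrightarrow> norm y \<le> B" using S_bounded_norm by blast
  have "cost c x0 - norm (c + gh x0) * (2 * B) \<le> cost c y" if y: "y \<in> S" for y
  proof -
    have "norm (y - x0) \<le> 2 * B" using B[OF y] B[OF x0S] norm_triangle_ineq4[of y x0] by linarith
    then have "- ((c + gh x0) \<bullet> (y - x0)) \<le> norm (c + gh x0) * (2 * B)"
      using norm_cauchy_schwarz[of "c + gh x0" "x0 - y"]
      by (smt (verit) inner_diff_right mult_left_mono norm_ge_zero norm_minus_commute)
    then show ?thesis using cost_tangent[where c=c, OF x0 y] by linarith
  qed
  then show ?thesis by (auto intro!: bdd_belowI2)
qed

text \<open>Around an interior point \<open>x0\<close> there is a ball in the hyperplane on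
  which the cost is bounded above; if the supporting plane at \<open>y\<close> does not decrease towards
  \<open>x0\<close>, evaluating it at the ball point in the direction of \<open>gh y\<close> bounds \<open>norm (gh y)\<close>.\<close>
lemma gradient_bounded_towards:
  assumes x0: "x0 \<in> rint S"
  shows "\<exists>K. \<forall>y\<in>rint S. 0 \<le> (c + gh y) \<bullet> (x0 - y) \<longrightarrow> norm (gh y) \<le> K"
proof -
  obtain e0 where e0: "0 < e0" "ball x0 e0 \<inter> hyp \<subseteq> S" and x0S: "x0 \<in> S"
    using x0 by (auto simp: rint_def)
  have "continuous (at x0 within S) h" using has_derivative_continuous[OF gh_deriv[OF x0]] .
  then obtain dl where dl: "0 < dl" "\<And>z. z \<in> S \<Longrightarrow> dist z x0 < dl \<Longrightarrow> dist (h z) (h x0) < 1"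
    unfolding continuous_within_eps_delta by (meson zero_less_one)
  obtain B where B: "\<And>y. y \<in> S \<Longrightarrow> norm y \<le> B" using S_bounded_norm by blast
  obtain L where L: "\<And>y. y \<in> S \<Longrightarrow> L \<le> cost c y"
    using cost_bounded_below[of c] unfolding bdd_below_def by blast
  define r where "r = min e0 dl / 2"
  have r: "0 < r" "r < e0" "r < dl" using e0 dl by (auto simp: r_def)
  define U where "U = norm c * B + h x0 + 1 - L"
  have cost_near: "cost c z \<le> norm c * B + h x0 + 1" if "z \<in> S" "dist z x0 < dl" for z
  proof -
    have "c \<bullet> z \<le> norm c * B"
      using norm_cauchy_schwarz[of c z] B[OF that(1)] by (meson mult_left_mono norm_ge_zero order_trans)
    moreover have "h z < h x0 + 1" using dl(2)[OF that] by (simp add: dist_real_def abs_less_iff)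
    ultimately show ?thesis by (simp add: cost_def)
  qed
  show ?thesis
  proof (intro exI[of _ "\<bar>U\<bar> / r + norm c"] ballI impI)
    fix y assume y: "y \<in> rint S" and towards: "0 \<le> (c + gh y) \<bullet> (x0 - y)"
    show "norm (gh y) \<le> \<bar>U\<bar> / r + norm c"
    proof (cases "norm (gh y) \<le> norm c")
      case True then show ?thesis using r by (simp add: add_increasing)
    next
      case False
      define u where "u = (1 / norm (gh y)) *\<^sub>R gh y"
      have u: "norm u = 1" "(\<Sum>p\<in>UNIV. u $ p) = 0" "gh y \<bullet> u = norm (gh y)"
        using False gh_tangent[OF y]
        by (auto simp: u_def sum_divide_distrib[symmetric] power2_norm_eq_inner[symmetric] power2_eq_square)
      define z where "z = x0 + r *\<^sub>R u"
      have zS: "z \<in> S" unfolding z_def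
        using hyp_ball_step[OF e0(2) _ u(2,1)] x0S S_hyp r by auto
      have "dist z x0 < dl" using u r by (simp add: z_def dist_norm)
      then have "cost c y + (c + gh y) \<bullet> (z - y) \<le> norm c * B + h x0 + 1"
        using cost_tangent[where c=c, OF y zS] cost_near[OF zS] by linarith
      moreover have "(c + gh y) \<bullet> (z - y) = (c + gh y) \<bullet> (x0 - y) + r * (c \<bullet> u + norm (gh y))"
        using u(3) by (simp add: z_def inner_add_right inner_add_left algebra_simps)
      moreover have "- norm c \<le> c \<bullet> u" using norm_cauchy_schwarz[of "-c" u] u(1) by simp
      moreover have "L \<le> cost c y" using L y rint_subset by blast
      ultimately have "r * (norm (gh y) - norm c) \<le> U"
        using towards r(1) unfolding U_def by (smt (verit) mult_left_mono)
      then have "norm (gh y) - norm c \<le> \<bar>U\<bar> / r"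
        using r(1) by (simp add: pos_le_divide_eq mult.commute)
      then show ?thesis by simp
    qed
  qed
qed

text \<open>Existence of a minimiser: the limit of a minimising sequence cannot lie on the relative
  boundary, since along the segment towards an interior point the gradient would stay bounded.\<close>
lemma cost_minimiser_exists: "\<exists>\<omega>\<in>S. \<forall>\<omega>'\<in>S. cost c \<omega> \<le> cost c \<omega>'"
proof -
  define m where "m = Inf (cost c ` S)"
  obtain b where b: "b \<in> S" and key: "\<And>x. x \<in> rint S \<Longrightarrow> cost c x + (c + gh x) \<bullet> (b - x) \<le> m"
    using minimising_sequence_limit[OF S_compact S_nonempty cost_bounded_below cost_tangent]
    unfolding m_def by blast
  have lower: "m \<le> cost c y" if "y \<in> S" for y
    unfolding m_def using cost_bounded_below that by (simp add: cInf_lower)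
  have "b \<in> rint S"
  proof (rule ccontr)
    assume "b \<notin> rint S"
    then have b_bd: "b \<in> rbd S"
      using b closed_closure S_compact by (simp add: rbd_def compact_imp_closed closure_closed)
    obtain x0 where x0: "x0 \<in> rint S" using rint_nonempty by blast
    obtain K where K: "\<And>y. y \<in> rint S \<Longrightarrow> 0 \<le> (c + gh y) \<bullet> (x0 - y) \<Longrightarrow> norm (gh y) \<le> K"
      using gradient_bounded_towards[OF x0] by blast
    define seg where "seg s = b + s *\<^sub>R (x0 - b)" for s :: real
    have x0b: "x0 \<noteq> b" using x0 \<open>b \<notin> rint S\<close> by blast
    have in_seg: "eventually (\<lambda>s. s \<in> {0<..<1}) (at_right (0::real))"
      by (rule eventually_at_right_real) simp
    have "filterlim seg (at b within rint S) (at_right 0)"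
      unfolding filterlim_at
    proof
      show "eventually (\<lambda>s. seg s \<in> rint S \<and> seg s \<noteq> b) (at_right 0)"
        using in_seg by eventually_elim
          (use rint_segment[OF S_convex S_hyp b x0] x0b in \<open>auto simp: seg_def\<close>)
      have "(seg \<longlongrightarrow> b + 0 *\<^sub>R (x0 - b)) (at_right 0)"
        unfolding seg_def by (intro tendsto_intros)
      then show "(seg \<longlongrightarrow> b) (at_right 0)" by simp
    qed
    from filterlim_compose[OF gh_steep[OF b_bd] this]
    have "eventually (\<lambda>s. K < norm (gh (seg s))) (at_right 0)"
      unfolding filterlim_at_top_dense by blast
    then obtain s where s: "0 < s" "s < 1" and steep: "K < norm (gh (seg s))"
      using eventually_happens'[OF trivial_limit_at_right_real eventually_conj[OF in_seg]] by auto
    have y: "seg s \<in> rint S" using rint_segment[OF S_convex S_hyp b x0] s by (simp add: seg_def)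
    let ?v = "c + gh (seg s)"
    have "?v \<bullet> (b - seg s) \<le> 0"
      using key[OF y] lower[of "seg s"] y rint_subset by force
    then have "0 \<le> s * (?v \<bullet> (x0 - b))" by (simp add: seg_def)
    then have "0 \<le> (1 - s) * (?v \<bullet> (x0 - b))" using s by (simp add: zero_le_mult_iff)
    moreover have "x0 - seg s = (1 - s) *\<^sub>R (x0 - b)" by (simp add: seg_def algebra_simps)
    ultimately have "0 \<le> ?v \<bullet> (x0 - seg s)" by simp
    then show False using K[OF y] steep by simp
  qed
  then have "cost c b \<le> m" using key by fastforce
  then show ?thesis using b lower by force
qed

lemma cost_minimiser_unique:
  assumes x: "x \<in> S" "\<forall>\<omega>'\<in>S. cost c x \<le> cost c \<omega>'"
    and y: "y \<in> S" "\<forall>\<omega>'\<in>S. cost c y \<le> cost c \<omega>'"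
  shows "x = y"
proof (rule ccontr)
  assume xy: "x \<noteq> y"
  define z where "z = (1 - 1/2) *\<^sub>R x + (1/2::real) *\<^sub>R y"
  have zS: "z \<in> S" using convexD_alt[OF S_convex x(1) y(1), of "1/2"] by (simp add: z_def)
  have strict: "\<forall>t. 0 < t \<and> t < 1 \<longrightarrow> h ((1 - t) *\<^sub>R x + t *\<^sub>R y) < (1 - t) * h x + t * h y"
    using h_strict_convex x(1) y(1) xy unfolding strict_convex_on_def by blast
  then have "h z < (h x + h y) / 2"
    using strict[rule_format, of "1/2"] unfolding z_def by simp
  moreover have "c \<bullet> z = (c \<bullet> x + c \<bullet> y) / 2" by (simp add: z_def inner_add_right)
  moreover have "cost c x \<le> cost c z" "cost c y \<le> cost c z" using x(2) y(2) zS by auto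
  ultimately show False unfolding cost_def by (simp add: field_simps)
qed

end

lemma admissible_pert_steep_convex:
  assumes "admissible_pert pth mu Ph h"
  shows "\<exists>gh. steep_convex Ph h gh"
proof -
  have sub: "Ph \<subseteq> psimplex" using assms by (auto simp: admissible_pert_def Pi_set_def)
  then have "compact Ph"
    using assms psimplex_bounded bounded_subset
    by (auto simp: admissible_pert_def compact_eq_bounded_closed)
  moreover have "Ph \<subseteq> hyp" using sub psimplex_hyp by blast
  ultimately show ?thesis using assms unfolding admissible_pert_def steep_convex_def by blast
qed

lemma Fh_in:
  assumes "admissible_pert pth mu Ph h"
  shows "Fh pth mu Ph h f \<in> Ph"
proof -
  obtain gh where "steep_convex Ph h gh" using admissible_pert_steep_convex[OF assms] by blast
  then interpret steep_convex Ph h gh .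
  define c where "c = (\<chi> p. (\<Sum>e\<in>set (pth p). delay mu e (f $ e)))"
  have "(\<Sum>p\<in>UNIV. \<omega> $ p * (\<Sum>e\<in>set (pth p). delay mu e (f $ e))) + h \<omega> = cost c \<omega>" for \<omega>
    by (simp add: c_def cost_def inner_vec_def mult.commute)
  then have "Fh pth mu Ph h f = (THE \<omega>. \<omega> \<in> Ph \<and> (\<forall>\<omega>'\<in>Ph. cost c \<omega> \<le> cost c \<omega>'))"
    unfolding Fh_def by presburger
  moreover have "\<exists>!\<omega>. \<omega> \<in> Ph \<and> (\<forall>\<omega>'\<in>Ph. cost c \<omega> \<le> cost c \<omega>')"
    using cost_minimiser_exists cost_minimiser_unique by blast
  ultimately show ?thesis using theI'[of "\<lambda>\<omega>. \<omega> \<in> Ph \<and> (\<forall>\<omega>'\<in>Ph. cost c \<omega> \<le> cost c \<omega>')"] by simp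
qed

definition ind :: "('p::finite \<Rightarrow> 'e list) \<Rightarrow> 'e \<Rightarrow> real^'p" where
  "ind pth e = (\<chi> p. if e \<in> set (pth p) then 1 else 0)"

lemma fpi_inner: "fpi pth \<pi> $ e = \<pi> \<bullet> ind pth e"
proof -
  have "\<pi> \<bullet> ind pth e = (\<Sum>p\<in>UNIV. if e \<in> set (pth p) then \<pi> $ p else 0)"
    by (auto simp: ind_def inner_vec_def intro!: sum.cong)
  also have "\<dots> = (\<Sum>p\<in>{p. e \<in> set (pth p)}. \<pi> $ p)"
    using sum.inter_filter[of UNIV "($) \<pi>" "\<lambda>p. e \<in> set (pth p)"] by simp
  finally show ?thesis by (simp add: fpi_def)
qed

lemma fpi_le1:
  assumes "\<pi> \<in> psimplex"
  shows "fpi pth \<pi> $ e \<le> 1"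
proof -
  have nonneg: "\<forall>p. 0 \<le> \<pi> $ p" and total: "(\<Sum>p\<in>UNIV. \<pi> $ p) = 1"
    using assms by (auto simp: psimplex_def)
  have "(\<Sum>p\<in>{p. e \<in> set (pth p)}. \<pi> $ p) \<le> (\<Sum>p\<in>UNIV. \<pi> $ p)"
    by (rule sum_mono2) (use nonneg in auto)
  then show ?thesis using total by (simp add: fpi_def)
qed

lemma link_flow_max_on_Ph:
  assumes "admissible_pert pth mu Ph h"
  shows "\<exists>M. \<forall>e. M e \<le> 1 \<and> ereal (M e) < cap mu e \<and> (\<forall>y\<in>Ph. fpi pth y $ e \<le> M e)"
proof -
  obtain gh where "steep_convex Ph h gh" using admissible_pert_steep_convex[OF assms] by blast
  then interpret steep_convex Ph h gh .
  have sub: "Ph \<subseteq> Pi_set pth mu" using assms by (simp add: admissible_pert_def)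
  have "\<exists>x\<in>Ph. \<forall>y\<in>Ph. fpi pth y $ e \<le> fpi pth x $ e" for e
    using continuous_attains_sup[OF S_compact S_nonempty, of "\<lambda>\<pi>. \<pi> \<bullet> ind pth e"]
    by (simp add: fpi_inner continuous_intros)
  then obtain xm where xm: "\<And>e. xm e \<in> Ph" "\<And>e y. y \<in> Ph \<Longrightarrow> fpi pth y $ e \<le> fpi pth (xm e) $ e"
    by metis
  have "fpi pth (xm e) $ e \<le> 1 \<and> ereal (fpi pth (xm e) $ e) < cap mu e" for e
    using sub xm(1)[of e] by (auto simp: Pi_set_def intro: fpi_le1)
  then show ?thesis using xm(2) by (intro exI[of _ "\<lambda>e. fpi pth (xm e) $ e"]) blast
qed

section \<open>Link flows along the dynamics\<close>

lemma solution_link_flow_deriv: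
  assumes sol: "is_solution src dst pth mu Ph h G \<eta> \<pi> \<rho>" and s: "0 \<le> s"
  shows "((\<lambda>s. fpi pth (\<pi> s) $ e) has_real_derivative
           \<eta> * (fpi pth (Fh pth mu Ph h (muvec mu (\<rho> s))) $ e - fpi pth (\<pi> s) $ e)) (at s within {0..})"
proof -
  have "(\<pi> has_vector_derivative \<eta> *\<^sub>R (Fh pth mu Ph h (muvec mu (\<rho> s)) - \<pi> s)) (at s within {0..})"
    using sol s by (simp add: is_solution_def)
  from bounded_linear.has_vector_derivative[OF bounded_linear_inner_left this, of "ind pth e"]
  show ?thesis
    by (simp add: fpi_inner has_real_derivative_iff_has_vector_derivative inner_diff_left)
qed

lemma decay_bound:
  fixes g g' :: "real \<Rightarrow> real"
  assumes eta: "0 < \<eta>" and t: "0 \<le> t"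
    and der: "\<And>s. 0 \<le> s \<Longrightarrow> (g has_real_derivative g' s) (at s within {0..})"
    and le: "\<And>s. 0 \<le> s \<Longrightarrow> g' s \<le> \<eta> * (M - g s)"
  shows "(g t - M) * exp (\<eta> * t) \<le> g 0 - M"
proof -
  define w where "w s = (g s - M) * exp (\<eta> * s)" for s
  define w' where "w' s = (g' s + \<eta> * (g s - M)) * exp (\<eta> * s)" for s
  have dw: "(w has_real_derivative w' s) (at s within {0..})" if "0 \<le> s" for s
  proof -
    have "((\<lambda>s. g s - M) has_real_derivative g' s - 0) (at s within {0..})"
      by (rule DERIV_diff[OF der[OF that] DERIV_const])
    moreover have "((\<lambda>s. exp (\<eta> * s)) has_real_derivative exp (\<eta> * s) * \<eta>) (at s within {0..})"
      by (rule DERIV_chain2[OF DERIV_exp DERIV_cmult_Id])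
    ultimately show ?thesis
      unfolding w_def w'_def by (rule DERIV_cong[OF DERIV_mult]) (simp add: algebra_simps)
  qed
  have "w t \<le> w 0"
  proof (rule DERIV_nonpos_imp_decreasing_open[OF t])
    fix x assume x: "0 < x" "x < t"
    have "(w has_real_derivative w' x) (at x within {0<..})"
      by (rule DERIV_subset[OF dw]) (use x in auto)
    then have "(w has_real_derivative w' x) (at x)"
      by (subst (asm) at_within_open) (use x in auto)
    moreover have "g' x + \<eta> * (g x - M) \<le> 0" using le[of x] x by (simp add: algebra_simps)
    then have "w' x \<le> 0" unfolding w'_def by (rule mult_nonpos_nonneg) simp
    ultimately show "\<exists>y. (w has_real_derivative y) (at x) \<and> y \<le> 0" by blast
  next
    have "continuous (at x within {0..}) w" if "0 \<le> x" for x
      using dw[OF that] by (rule DERIV_continuous)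
    then show "continuous_on {0..t} w"
      unfolding continuous_on_eq_continuous_within
      by (meson atLeastAtMost_iff atLeast_iff continuous_within_subset subsetI)
  qed
  then show ?thesis by (simp add: w_def)
qed

text \<open>After time \<open>ln 2 / \<eta>\<close> the excess over \<open>M\<close> has halved; with \<open>g 0, M \<le> c\<close> this puts
  \<open>g\<close> below the midpoint of \<open>M\<close> and \<open>c\<close>.\<close>
lemma halving_time_bound:
  fixes g g' :: "real \<Rightarrow> real"
  assumes eta: "0 < \<eta>" and t: "ln 2 / \<eta> \<le> t"
    and der: "\<And>s. 0 \<le> s \<Longrightarrow> (g has_real_derivative g' s) (at s within {0..})"
    and le: "\<And>s. 0 \<le> s \<Longrightarrow> g' s \<le> \<eta> * (M - g s)"
    and "g 0 \<le> c" and "M \<le> c"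
  shows "g t \<le> (M + c) / 2"
proof (cases "g t \<le> M")
  case True then show ?thesis using \<open>M \<le> c\<close> by simp
next
  case False
  have "ln 2 \<le> \<eta> * t" using t eta by (simp add: divide_le_eq mult.commute)
  then have two: "2 \<le> exp (\<eta> * t)" by (metis exp_ln exp_le_cancel_iff zero_less_numeral)
  have "0 \<le> t" using t eta by (smt (verit) divide_nonneg_pos ln_ge_zero)
  have "(g t - M) * 2 \<le> (g t - M) * exp (\<eta> * t)" using False two by (intro mult_left_mono) auto
  also have "\<dots> \<le> g 0 - M" by (rule decay_bound[OF eta \<open>0 \<le> t\<close> der le])
  finally show ?thesis using \<open>g 0 \<le> c\<close> by simp
qed

text \<open>Truncating the capacity at the unit demand gives a finite level \<open>c\<close> that dominates every
  feasible flow value, and the midpoint between \<open>c\<close> and a flow \<open>M\<close> below capacity is still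
  below capacity.\<close>
lemma midpoint_below_capacity:
  fixes M :: real and C :: ereal
  assumes "M \<le> 1" and "ereal M < C"
  shows "ereal ((M + real_of_ereal (min 1 C)) / 2) < C"
    and "\<And>a. a \<le> 1 \<Longrightarrow> ereal a < C \<Longrightarrow> a \<le> real_of_ereal (min 1 C)"
proof -
  have cases: "(\<exists>C'. C = ereal C' \<and> C' \<le> 1) \<or> 1 < C"
    using assms(2) by (cases C) (auto simp: one_ereal_def)
  show "ereal ((M + real_of_ereal (min 1 C)) / 2) < C"
  proof (cases "1 < C")
    case True
    then have "ereal ((M + real_of_ereal (min 1 C)) / 2) \<le> 1"
      using assms(1) by (simp add: min_absorb1 less_imp_le one_ereal_def)
    then show ?thesis using True by (rule order.strict_trans1)
  next
    case False
    then show ?thesis using cases assms by (auto simp: min_def one_ereal_def)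
  qed
  show "a \<le> real_of_ereal (min 1 C)" if "a \<le> 1" "ereal a < C" for a
    using cases that by (auto simp: min_def one_ereal_def)
qed

theorem lemma4:
  fixes n :: nat and src dst :: "'e::finite \<Rightarrow> nat" and pth :: "'p::finite \<Rightarrow> 'e list"
    and mu :: "'e \<Rightarrow> real \<Rightarrow> real" and Ph :: "(real^'p) set" and h :: "real^'p \<Rightarrow> real"
  assumes "network n src dst pth"
    and "flow_density mu"
    and "mincut n src dst mu > 1"
    and "admissible_pert pth mu Ph h"
  shows "\<exists>Cbar :: 'e \<Rightarrow> real. (\<forall>e. ereal (Cbar e) < cap mu e) \<and>
    (\<forall>G. local_decisions n src pth mu G \<longrightarrow>
      (\<forall>\<eta>>0. \<exists>t0\<ge>0. \<forall>\<pi> \<rho>.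
         admissible_init pth mu (\<pi> 0) (\<rho> 0) \<and> is_solution src dst pth mu Ph h G \<eta> \<pi> \<rho> \<longrightarrow>
         (\<forall>t\<ge>t0. \<forall>e. fpi pth (\<pi> t) $ e \<le> Cbar e)))"
proof -
  obtain M where M: "\<And>e. M e \<le> 1" "\<And>e. ereal (M e) < cap mu e"
      "\<And>e y. y \<in> Ph \<Longrightarrow> fpi pth y $ e \<le> M e"
    using link_flow_max_on_Ph[OF assms(4)] by blast
  define c where "c e = real_of_ereal (min 1 (cap mu e))" for e
  note mid = midpoint_below_capacity[OF M(1,2), folded c_def]
  have bound: "\<exists>t0\<ge>0. \<forall>\<pi> \<rho>. admissible_init pth mu (\<pi> 0) (\<rho> 0) \<and> is_solution src dst pth mu Ph h G \<eta> \<pi> \<rho> \<longrightarrow>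
          (\<forall>t\<ge>t0. \<forall>e. fpi pth (\<pi> t) $ e \<le> (M e + c e) / 2)" if eta: "0 < \<eta>" for G \<eta>
  proof (intro exI[of _ "ln 2 / \<eta>"] conjI allI impI)
    fix \<pi> \<rho> t e
    assume sol: "admissible_init pth mu (\<pi> 0) (\<rho> 0) \<and> is_solution src dst pth mu Ph h G \<eta> \<pi> \<rho>"
      and t: "ln 2 / \<eta> \<le> t"
    let ?g = "\<lambda>s. fpi pth (\<pi> s) $ e"
    let ?g' = "\<lambda>s. \<eta> * (fpi pth (Fh pth mu Ph h (muvec mu (\<rho> s))) $ e - ?g s)"
    show "?g t \<le> (M e + c e) / 2"
    proof (rule halving_time_bound[OF eta t, where g' = ?g'])
      show "(?g has_real_derivative ?g' s) (at s within {0..})" if "0 \<le> s" for s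
        using solution_link_flow_deriv sol that by blast
      show "?g' s \<le> \<eta> * (M e - ?g s)" for s
        using M(3)[OF Fh_in[OF assms(4)]] eta by simp
      have "\<pi> 0 \<in> Pi_set pth mu" using sol by (simp add: admissible_init_def)
      then show "?g 0 \<le> c e" by (auto simp: Pi_set_def intro: mid(2) fpi_le1)
      show "M e \<le> c e" by (rule mid(2)[OF M(1,2)])
    qed
  qed (use eta in simp)
  show ?thesis using mid(1) bound by (intro exI[of _ "\<lambda>e. (M e + c e) / 2"]) blast
qed

end
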